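(* Let $(X,d)$ be a quasi-pseudometric space and $\varphi:X\to\mathbb{R}\cup\{\infty\}$ a proper bounded below function. For $x\in X$ let $S(x)=\{y\in X:\varphi(y)+d(y,x)\le\varphi(x)\}$. The following statements are equivalent: (wEk) there exists $z\in X$ such that $\varphi(y)=\varphi(z)$ for all $y\in S(z)$; (Tak) if for every $x\in X$ with $\inf\varphi(X)<\varphi(x)$ there exists $y\in S(x)$ with $\varphi(y)<\varphi(x)$, then there exists $z\in X$ with $\varphi(z)=\inf\varphi(X)$; (Car) for every mapping $T:X\to X$ satisfying $Tx\in S(x)$ for all $x\in X$, there exists $z\in X$ with $\varphi(Tz)=\varphi(z)$.
   Context: A quasi-pseudometric on $X$ is $d:X\times X\to[0,\infty)$ with $d(x,x)=0$ and $d(x,z)\le d(x,y)+d(y,z)$ for all $x,y,z$ (symmetry not assumed). $\varphi$ is proper if $\varphi(x)<\infty$ for some $x$. *)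

theory Defs
  imports "HOL-Library.Extended_Real"
begin

definition quasi_pseudometric :: "'a set \<Rightarrow> ('a \<Rightarrow> 'a \<Rightarrow> real) \<Rightarrow> bool" where
  "quasi_pseudometric X d \<longleftrightarrow>
     (\<forall>x\<in>X. \<forall>y\<in>X. 0 \<le> d x y) \<and>
     (\<forall>x\<in>X. d x x = 0) \<and>
     (\<forall>x\<in>X. \<forall>y\<in>X. \<forall>z\<in>X. d x z \<le> d x y + d y z)"

definition Sset :: "'a set \<Rightarrow> ('a \<Rightarrow> 'a \<Rightarrow> real) \<Rightarrow> ('a \<Rightarrow> ereal) \<Rightarrow> 'a \<Rightarrow> 'a set" where
  "Sset X d \<phi> x = {y \<in> X. \<phi> y + ereal (d y x) \<le> \<phi> x}"

end

theory Submission
  imports Defs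
begin

text \<open>Nonnegativity of d makes \<phi> non-increasing along S, so all three conditions assert a
  point z that cannot be strictly improved inside S(z). A minimiser is such a point, and
  Takahashi's hypothesis fails exactly when every point can be improved; Caristi's condition is
  the choice-function reformulation of the same statement.\<close>

lemma Sset_subset: "Sset X d \<phi> x \<subseteq> X"
  unfolding Sset_def by auto

lemma Sset_le:
  assumes "quasi_pseudometric X d" "x \<in> X" "y \<in> Sset X d \<phi> x"
  shows "\<phi> y \<le> \<phi> x"
proof -
  have y: "y \<in> X" "\<phi> y + ereal (d y x) \<le> \<phi> x"
    using assms(3) unfolding Sset_def by auto
  have "0 \<le> d y x"
    using assms(1,2) y(1) unfolding quasi_pseudometric_def by auto
  then have "\<phi> y \<le> \<phi> y + ereal (d y x)"
    by (metis add.right_neutral add_left_mono zero_ereal_def ereal_less_eq(3))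
  with y(2) show ?thesis by simp
qed

lemma constant_point_iff_Takahashi:
  fixes \<phi> :: "'a \<Rightarrow> 'b::complete_linorder"
  assumes S_sub: "\<And>x y. x \<in> X \<Longrightarrow> y \<in> S x \<Longrightarrow> y \<in> X"
    and S_le: "\<And>x y. x \<in> X \<Longrightarrow> y \<in> S x \<Longrightarrow> \<phi> y \<le> \<phi> x"
  shows "(\<exists>z\<in>X. \<forall>y\<in>S z. \<phi> y = \<phi> z) \<longleftrightarrow>
         ((\<forall>x\<in>X. (INF u\<in>X. \<phi> u) < \<phi> x \<longrightarrow> (\<exists>y\<in>S x. \<phi> y < \<phi> x))
            \<longrightarrow> (\<exists>z\<in>X. \<phi> z = (INF u\<in>X. \<phi> u)))"
    (is "?const \<longleftrightarrow> (?descent \<longrightarrow> ?attained)")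
proof
  assume ?const
  then obtain z where z: "z \<in> X" "\<forall>y\<in>S z. \<phi> y = \<phi> z" by blast
  show "?descent \<longrightarrow> ?attained"
  proof
    assume ?descent
    with z have "\<not> (INF u\<in>X. \<phi> u) < \<phi> z" by fastforce
    with INF_lower[of z X \<phi>] z(1) have "\<phi> z = (INF u\<in>X. \<phi> u)" by simp
    with z(1) show ?attained by blast
  qed
next
  assume Takahashi: "?descent \<longrightarrow> ?attained"
  show ?const
  proof (rule ccontr)
    assume "\<not> ?const"
    then have strict: "\<forall>z\<in>X. \<exists>y\<in>S z. \<phi> y < \<phi> z"
      using S_le by (metis order_le_less)
    then obtain z where z: "z \<in> X" "\<phi> z = (INF u\<in>X. \<phi> u)"
      using Takahashi by blast
    with strict obtain y where y: "y \<in> S z" "\<phi> y < \<phi> z" by blast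
    have "(INF u\<in>X. \<phi> u) \<le> \<phi> y"
      using S_sub[OF z(1) y(1)] by (rule INF_lower)
    with y(2) z(2) show False by simp
  qed
qed

lemma constant_point_iff_Caristi:
  "(\<exists>z\<in>X. \<forall>y\<in>S z. \<phi> y = \<phi> z) \<longleftrightarrow>
   (\<forall>T. (\<forall>x\<in>X. T x \<in> S x) \<longrightarrow> (\<exists>z\<in>X. \<phi> (T z) = \<phi> z))"
proof
  assume "\<exists>z\<in>X. \<forall>y\<in>S z. \<phi> y = \<phi> z"
  then show "\<forall>T. (\<forall>x\<in>X. T x \<in> S x) \<longrightarrow> (\<exists>z\<in>X. \<phi> (T z) = \<phi> z)" by blast
next
  assume Caristi: "\<forall>T. (\<forall>x\<in>X. T x \<in> S x) \<longrightarrow> (\<exists>z\<in>X. \<phi> (T z) = \<phi> z)"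
  show "\<exists>z\<in>X. \<forall>y\<in>S z. \<phi> y = \<phi> z"
  proof (rule ccontr)
    assume "\<not> ?thesis"
    then have "\<forall>z\<in>X. \<exists>y. y \<in> S z \<and> \<phi> y \<noteq> \<phi> z" by blast
    from bchoice[OF this] obtain T where "\<forall>z\<in>X. T z \<in> S z \<and> \<phi> (T z) \<noteq> \<phi> z"
      by blast
    with Caristi show False by blast
  qed
qed

theorem theorem3p8:
  fixes X :: "'a set" and d :: "'a \<Rightarrow> 'a \<Rightarrow> real" and \<phi> :: "'a \<Rightarrow> ereal"
  assumes qpm: "quasi_pseudometric X d"
    and proper: "\<exists>x\<in>X. \<phi> x < \<infinity>"
    and bdd_below: "\<exists>c::real. \<forall>x\<in>X. ereal c \<le> \<phi> x"
  shows "((\<exists>z\<in>X. \<forall>y\<in>Sset X d \<phi> z. \<phi> y = \<phi> z)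
          \<longleftrightarrow>
          ((\<forall>x\<in>X. (INF u\<in>X. \<phi> u) < \<phi> x \<longrightarrow> (\<exists>y\<in>Sset X d \<phi> x. \<phi> y < \<phi> x))
             \<longrightarrow> (\<exists>z\<in>X. \<phi> z = (INF u\<in>X. \<phi> u))))
       \<and>
       (((\<forall>x\<in>X. (INF u\<in>X. \<phi> u) < \<phi> x \<longrightarrow> (\<exists>y\<in>Sset X d \<phi> x. \<phi> y < \<phi> x))
             \<longrightarrow> (\<exists>z\<in>X. \<phi> z = (INF u\<in>X. \<phi> u)))
          \<longleftrightarrow>
          (\<forall>T. (\<forall>x\<in>X. T x \<in> Sset X d \<phi> x) \<longrightarrow> (\<exists>z\<in>X. \<phi> (T z) = \<phi> z)))"
proof -
  have Takahashi: "(\<exists>z\<in>X. \<forall>y\<in>Sset X d \<phi> z. \<phi> y = \<phi> z) \<longleftrightarrow>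
      ((\<forall>x\<in>X. (INF u\<in>X. \<phi> u) < \<phi> x \<longrightarrow> (\<exists>y\<in>Sset X d \<phi> x. \<phi> y < \<phi> x))
         \<longrightarrow> (\<exists>z\<in>X. \<phi> z = (INF u\<in>X. \<phi> u)))"
  proof (rule constant_point_iff_Takahashi[where S = "Sset X d \<phi>"])
    show "y \<in> X" if "y \<in> Sset X d \<phi> x" for x y
      using that Sset_subset[of X d \<phi> x] by blast
    show "\<phi> y \<le> \<phi> x" if "x \<in> X" "y \<in> Sset X d \<phi> x" for x y
      using Sset_le[OF qpm that] .
  qed
  show ?thesis
    using Takahashi constant_point_iff_Caristi[of X "Sset X d \<phi>" \<phi>] by argo
qed

end
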